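(* Let $k\ge 3$ and let $\mathbf a=(a_1,\dots,a_k)$ be positive integers with $\gcd(a_1,\dots,a_k)=1$. Then $\mathcal T(\mathbf a)$ is old regular if and only if there is an index $i\in\{1,\dots,k\}$ such that $\mathcal T(\mathbf a[i])$ is primitive and regular and $a_i\mathbb Z_p\subseteq\overline{DQ_p(\mathbf a[i])}$ for all odd primes $p$.
   Context: For positive integers $a_1,\dots,a_k$, the triangular form $\mathcal T(a_1,\dots,a_k)$ is the polynomial $\sum_{i=1}^k a_i\,\frac{x_i(x_i+1)}{2}$. A nonnegative integer $n$ is represented by it if $\sum a_i x_i(x_i+1)/2=n$ has a solution $x\in\mathbb Z^k$, and locally represented if this equation has a solution in $\mathbb Z_p^k$ for every prime $p$. The form is primitive if the gcd of its coefficients is 1, and regular if it represents every positive integer that it locally represents. For $\mathbf a=(a_1,\dots,a_k)$ and $1\le i\le k$, $\mathbf a[i]$ denotes the vector obtained by deleting $a_i$. A regular form $\mathcal T(\mathbf a)$ is old if there is an index $i$ such that $\mathcal T(\mathbf a[i])$ represents exactly the same set of positive integers as $\mathcal T(\mathbf a)$; it is new if it is regular and not old. For a vector $\mathbf b=(b_1,\dots,b_r)$ of positive integers and an odd prime $p$, $\overline{DQ_p(\mathbf b)}=\{\gamma\in\mathbb Z_p:\gamma=\sum_i b_iy_i^2\text{ for some }y_i\in\mathbb Z_p\}$. *)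

theory Defs
  imports "HOL-Number_Theory.Number_Theory"
begin

definition del_nth :: "'a list \<Rightarrow> nat \<Rightarrow> 'a list" where
  "del_nth a i = take i a @ drop (Suc i) a"

definition tri_rep :: "nat list \<Rightarrow> nat \<Rightarrow> bool" where
  "tri_rep a n \<longleftrightarrow> (\<exists>x::nat \<Rightarrow> int.
     (\<Sum>i<length a. int (a ! i) * (x i * (x i + 1) div 2)) = int n)"

text \<open>A p-adic integer, as an element of the inverse limit of Z/p^m Z:
  a sequence of integers x m (representing a residue mod p^m) compatible under reduction.\<close>
definition padic_int :: "nat \<Rightarrow> (nat \<Rightarrow> int) \<Rightarrow> bool" where
  "padic_int p x \<longleftrightarrow> (\<forall>m. [x (Suc m) = x m] (mod (int p ^ m)))"

text \<open>Local representation at p: a solution in Z_p^k of sum a_i x_i(x_i+1) = 2n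
  (equivalent in the domain Z_p to sum a_i x_i(x_i+1)/2 = n), checked in every Z/p^m.\<close>
definition loc_rep_at :: "nat list \<Rightarrow> nat \<Rightarrow> nat \<Rightarrow> bool" where
  "loc_rep_at a p n \<longleftrightarrow> (\<exists>x::nat \<Rightarrow> nat \<Rightarrow> int.
     (\<forall>i<length a. padic_int p (x i)) \<and>
     (\<forall>m. [(\<Sum>i<length a. int (a ! i) * (x i m * (x i m + 1))) = 2 * int n] (mod (int p ^ m))))"

definition loc_rep :: "nat list \<Rightarrow> nat \<Rightarrow> bool" where
  "loc_rep a n \<longleftrightarrow> (\<forall>p. prime p \<longrightarrow> loc_rep_at a p n)"

definition primitive :: "nat list \<Rightarrow> bool" where
  "primitive a \<longleftrightarrow> Gcd (set a) = 1"

definition regular :: "nat list \<Rightarrow> bool" where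
  "regular a \<longleftrightarrow> (\<forall>n>0. loc_rep a n \<longrightarrow> tri_rep a n)"

definition old_regular :: "nat list \<Rightarrow> bool" where
  "old_regular a \<longleftrightarrow> regular a \<and>
     (\<exists>i<length a. \<forall>n>0. tri_rep (del_nth a i) n \<longleftrightarrow> tri_rep a n)"

definition new_regular :: "nat list \<Rightarrow> bool" where
  "new_regular a \<longleftrightarrow> regular a \<and> \<not> old_regular a"

text \<open>gamma (a p-adic integer) lies in the closure of DQ_p(b): gamma = sum b_j y_j^2, y_j in Z_p.\<close>
definition in_DQ_closure :: "nat \<Rightarrow> nat list \<Rightarrow> (nat \<Rightarrow> int) \<Rightarrow> bool" where
  "in_DQ_closure p b \<gamma> \<longleftrightarrow> (\<exists>y::nat \<Rightarrow> nat \<Rightarrow> int.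
     (\<forall>j<length b. padic_int p (y j)) \<and>
     (\<forall>m. [\<gamma> m = (\<Sum>j<length b. int (b ! j) * (y j m)^2)] (mod (int p ^ m))))"

definition mult_Zp_sub_DQ :: "nat \<Rightarrow> nat \<Rightarrow> nat list \<Rightarrow> bool" where
  "mult_Zp_sub_DQ p c b \<longleftrightarrow>
     (\<forall>\<gamma>. padic_int p \<gamma> \<longrightarrow> in_DQ_closure p b (\<lambda>m. int c * \<gamma> m))"

end

theory Submission
  imports Defs
begin

text \<open>
  Write \<open>b = a[i]\<close>, \<open>c = a\<^sub>i\<close> and \<open>Q\<^sub>b(y) = \<Sigma> b\<^sub>j y\<^sub>j\<^sup>2\<close>, so that \<open>Q\<^sub>b(2x+1) = 8\<T>(b)(x) + \<Sigma> b\<^sub>j\<close>.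

  If \<open>\<T>(a)\<close> is old at \<open>i\<close>, then \<open>\<T>(b)\<close> inherits regularity, and its value set is closed
  under adding \<open>c\<close> (take \<open>x\<^sub>i = 1\<close>). Hence it represents \<open>c\<close>, which forces primitivity,
  and modulo every odd \<open>q = p\<^sup>m\<close> the values \<open>Q\<^sub>b(2x+1)\<close> run through all multiples of \<open>c\<close>
  (they move in steps of \<open>8c\<close> and \<open>8\<close> is a unit), i.e. \<open>c\<int>\<^sub>p \<subseteq> DQ\<^sub>p(b)\<close>.

  Conversely, \<open>c\<int>\<^sub>p \<subseteq> DQ\<^sub>p(b)\<close> lets \<open>Q\<^sub>b\<close> absorb any shift \<open>c s\<close> modulo \<open>p\<^sup>m\<close>: if some term
  \<open>b\<^sub>j u\<^sub>j\<^sup>2\<close> has \<open>p\<close>-valuation below that of \<open>c\<close>, rescale \<open>u\<^sub>j\<close> by a Hensel square root of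
  \<open>1 + p(\<dots>)\<close>; otherwise the shifted value lies in \<open>c\<int>\<^sub>p\<close>. So the term \<open>c x\<^sub>i(x\<^sub>i+1)\<close> can be
  dropped at every odd prime, while at \<open>2\<close> an odd coefficient of the primitive \<open>b\<close> represents
  everything. Thus whatever \<open>\<T>(a)\<close> represents, globally or locally, \<open>\<T>(b)\<close> represents
  locally, hence globally. Solutions modulo all \<open>p\<^sup>m\<close> are assembled into \<open>p\<close>-adic ones by a
  pigeonhole (Koenig's lemma) argument.
\<close>

section \<open>Deleting a coordinate\<close>

definition skip :: "nat \<Rightarrow> nat \<Rightarrow> nat" where
  "skip i j = (if j < i then j else Suc j)"

definition insert_at :: "nat \<Rightarrow> 'a \<Rightarrow> (nat \<Rightarrow> 'a) \<Rightarrow> nat \<Rightarrow> 'a" where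
  "insert_at i c w k = (if k < i then w k else if k = i then c else w (k - 1))"

lemma insert_at_skip [simp]: "insert_at i c w (skip i j) = w j"
  by (simp add: insert_at_def skip_def)

lemma insert_at_same [simp]: "insert_at i c w i = c"
  by (simp add: insert_at_def)

lemma length_del_nth: "i < length a \<Longrightarrow> length (del_nth a i) = length a - 1"
  by (simp add: del_nth_def)

lemma nth_del_nth: "i < length a \<Longrightarrow> j < length a - 1 \<Longrightarrow> del_nth a i ! j = a ! skip i j"
  by (auto simp add: del_nth_def skip_def nth_append min_def)

lemma set_subset_insert_del_nth: "i < length a \<Longrightarrow> set a \<subseteq> insert (a ! i) (set (del_nth a i))"
  by (subst id_take_nth_drop[of i a]) (auto simp: del_nth_def)

lemma sum_lessThan_skip:
  fixes g :: "nat \<Rightarrow> 'b::comm_monoid_add"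
  assumes "i < L"
  shows "(\<Sum>j<L. g j) = g i + (\<Sum>j<L-1. g (skip i j))"
proof -
  have "inj_on (skip i) {..<L-1}"
    by (auto simp: inj_on_def skip_def split: if_splits)
  moreover have "skip i ` {..<L-1} = {..<L} - {i}"
  proof
    show "skip i ` {..<L-1} \<subseteq> {..<L} - {i}"
      using assms by (auto simp: skip_def)
    show "{..<L} - {i} \<subseteq> skip i ` {..<L-1}"
    proof
      fix k assume k: "k \<in> {..<L} - {i}"
      show "k \<in> skip i ` {..<L-1}"
      proof (cases "k < i")
        case True
        then show ?thesis using k assms by (auto simp: skip_def image_iff intro!: bexI[of _ k])
      next
        case False
        then have "k = skip i (k - 1)" "k - 1 < L - 1" using k by (auto simp: skip_def)
        then show ?thesis by blast
      qed
    qed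
  qed
  ultimately have "sum g ({..<L} - {i}) = (\<Sum>j<L-1. g (skip i j))"
    using sum.reindex[of "skip i" "{..<L-1}" g] by simp
  then show ?thesis
    using assms by (simp add: sum.remove)
qed

lemma padic_int_const: "padic_int p (\<lambda>_. k)"
  by (simp add: padic_int_def)

lemma padic_int_insert_at:
  assumes "i < L" "j < L" "\<forall>j<L-1. padic_int p (x j)" "padic_int p c"
  shows "padic_int p (insert_at i c x j)"
  using assms by (auto simp: insert_at_def)

section \<open>The triangular and the diagonal form\<close>

definition diag_form :: "nat list \<Rightarrow> (nat \<Rightarrow> int) \<Rightarrow> int" where
  "diag_form b y = (\<Sum>j<length b. int (b ! j) * (y j)^2)"

text \<open>Twice the triangular form; it avoids the division by 2 and is what \<open>loc_rep_at\<close> uses.\<close>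
definition pronic_form :: "nat list \<Rightarrow> (nat \<Rightarrow> int) \<Rightarrow> int" where
  "pronic_form b x = (\<Sum>j<length b. int (b ! j) * (x j * (x j + 1)))"

lemma diag_form_cong:
  "(\<And>j. j < length b \<Longrightarrow> [y j = y' j] (mod M)) \<Longrightarrow> [diag_form b y = diag_form b y'] (mod M)"
  unfolding diag_form_def by (intro cong_sum cong_mult cong_pow cong_refl) auto

lemma pronic_form_cong:
  "(\<And>j. j < length b \<Longrightarrow> [x j = x' j] (mod M)) \<Longrightarrow> [pronic_form b x = pronic_form b x'] (mod M)"
  unfolding pronic_form_def by (intro cong_sum cong_mult cong_add cong_refl) auto

lemma diag_form_odd:
  "diag_form b (\<lambda>j. 2 * x j + 1) = 4 * pronic_form b x + (\<Sum>j<length b. int (b ! j))"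
proof -
  have "diag_form b (\<lambda>j. 2 * x j + 1) =
      (\<Sum>j<length b. 4 * (int (b ! j) * (x j * (x j + 1))) + int (b ! j))"
    unfolding diag_form_def by (rule sum.cong) (simp_all add: power2_eq_square algebra_simps)
  then show ?thesis
    by (simp add: sum.distrib sum_distrib_left pronic_form_def)
qed

lemma twice_tri_sum:
  "2 * (\<Sum>j<length a. int (a ! j) * (x j * (x j + 1) div 2)) = pronic_form a x"
  unfolding pronic_form_def sum_distrib_left
proof (rule sum.cong)
  fix j
  have "2 * (x j * (x j + 1) div 2) = x j * (x j + 1)" by simp
  then show "2 * (int (a ! j) * (x j * (x j + 1) div 2)) = int (a ! j) * (x j * (x j + 1))"
    by (metis mult.left_commute)
qed simp

lemma tri_rep_iff_pronic_form: "tri_rep a n \<longleftrightarrow> (\<exists>x. pronic_form a x = 2 * int n)"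
  unfolding tri_rep_def by (simp flip: twice_tri_sum)

lemma loc_rep_at_iff_pronic_form:
  "loc_rep_at a p n \<longleftrightarrow> (\<exists>x. (\<forall>j<length a. padic_int p (x j)) \<and>
     (\<forall>m. [pronic_form a (\<lambda>j. x j m) = 2 * int n] (mod int p ^ m)))"
  unfolding loc_rep_at_def pronic_form_def by simp

lemma pronic_form_del_nth:
  assumes "i < length a"
  shows "pronic_form a x = int (a ! i) * (x i * (x i + 1)) + pronic_form (del_nth a i) (x \<circ> skip i)"
  using sum_lessThan_skip[OF assms, of "\<lambda>j. int (a ! j) * (x j * (x j + 1))"] assms
  by (simp add: pronic_form_def length_del_nth nth_del_nth)

lemma pronic_form_insert_at:
  "i < length a \<Longrightarrow>
    pronic_form a (insert_at i t x) = int (a ! i) * (t * (t + 1)) + pronic_form (del_nth a i) x"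
  using pronic_form_del_nth[of i a "insert_at i t x"] by (simp add: comp_def)

lemma tri_rep_if_tri_rep_del_nth:
  assumes "i < length a" "tri_rep (del_nth a i) n"
  shows "tri_rep a n"
proof -
  obtain x where "pronic_form (del_nth a i) x = 2 * int n"
    using assms(2) unfolding tri_rep_iff_pronic_form by blast
  then have "pronic_form a (insert_at i 0 x) = 2 * int n"
    using assms(1) by (simp add: pronic_form_insert_at)
  then show ?thesis
    unfolding tri_rep_iff_pronic_form by blast
qed

lemma loc_rep_if_loc_rep_del_nth:
  assumes i: "i < length a" and "loc_rep (del_nth a i) n"
  shows "loc_rep a n"
  unfolding loc_rep_def
proof (intro allI impI)
  fix p :: nat assume "prime p"
  then obtain x where x: "\<forall>j<length a - 1. padic_int p (x j)"
    and sol: "\<forall>m. [pronic_form (del_nth a i) (\<lambda>j. x j m) = 2 * int n] (mod int p ^ m)"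
    using assms(2) i unfolding loc_rep_def loc_rep_at_iff_pronic_form by (auto simp: length_del_nth)
  have "(\<lambda>j. insert_at i (\<lambda>_. 0) x j m) = insert_at i 0 (\<lambda>j. x j m)" for m
    by (auto simp: insert_at_def)
  then show "loc_rep_at a p n"
    unfolding loc_rep_at_iff_pronic_form using i x sol
    by (intro exI[of _ "insert_at i (\<lambda>_. 0) x"])
       (simp add: padic_int_insert_at padic_int_const pronic_form_insert_at)
qed

section \<open>From congruences to \<open>p\<close>-adic solutions\<close>

lemma residues_agree_infinitely_often:
  fixes f :: "nat \<Rightarrow> nat \<Rightarrow> int" and q :: int
  assumes "q > 0"
  obtains M0 where "M0 \<ge> k" "\<And>M. \<exists>M'\<ge>M. M' \<ge> k \<and> (\<forall>j<L. [f M' j = f M0 j] (mod q))"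
proof -
  define r where "r M = (\<lambda>j. if j < L then f M j mod q else undefined)" for M
  have "r ` {k..} \<subseteq> PiE {..<L} (\<lambda>_. {0..<q})"
    using assms by (auto simp: r_def PiE_def extensional_def)
  then have "finite (r ` {k..})"
    by (rule finite_subset) (auto intro: finite_PiE)
  then obtain M0 where "M0 \<ge> k" and inf: "infinite {M \<in> {k..}. r M = r M0}"
    using pigeonhole_infinite[OF infinite_Ici] by auto
  moreover have "\<exists>M'\<ge>M. M' \<ge> k \<and> (\<forall>j<L. [f M' j = f M0 j] (mod q))" for M
  proof -
    obtain M' where "M' \<ge> M" "M' \<ge> k" and r: "r M' = r M0"
      using inf unfolding infinite_nat_iff_unbounded_le by auto
    moreover have "[f M' j = f M0 j] (mod q)" if "j < L" for j
      using fun_cong[OF r, of j] that by (simp add: r_def cong_def)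
    ultimately show ?thesis by blast
  qed
  ultimately show ?thesis using that by blast
qed

definition extendable :: "nat \<Rightarrow> nat \<Rightarrow> (nat \<Rightarrow> (nat \<Rightarrow> int) \<Rightarrow> bool) \<Rightarrow> nat \<Rightarrow> (nat \<Rightarrow> int) \<Rightarrow> bool"
  where "extendable p L P m z \<longleftrightarrow> (\<forall>M\<ge>m. \<exists>z'. P M z' \<and> (\<forall>j<L. [z' j = z j] (mod int p ^ m)))"

lemma extendable_Suc:
  assumes p: "p > 1"
    and down: "\<And>m z. P (Suc m) z \<Longrightarrow> P m z"
    and ext: "extendable p L P m z"
  shows "\<exists>z'. extendable p L P (Suc m) z' \<and> (\<forall>j<L. [z' j = z j] (mod int p ^ m))"
proof -
  have down_le: "P M z" if "P M' z" "M \<le> M'" for M M' z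
    using that(2,1) by (induction rule: dec_induct) (auto intro: down)
  have "\<forall>M. \<exists>z'. M \<ge> Suc m \<longrightarrow> P M z' \<and> (\<forall>j<L. [z' j = z j] (mod int p ^ m))"
    using ext unfolding extendable_def by (metis Suc_leD)
  then obtain f where f: "\<And>M. M \<ge> Suc m \<Longrightarrow> P M (f M) \<and> (\<forall>j<L. [f M j = z j] (mod int p ^ m))"
    by metis
  have "int p ^ Suc m > 0" using p by simp
  then obtain M0 where M0: "M0 \<ge> Suc m"
    and agree: "\<And>M. \<exists>M'\<ge>M. M' \<ge> Suc m \<and> (\<forall>j<L. [f M' j = f M0 j] (mod int p ^ Suc m))"
    by (rule residues_agree_infinitely_often[where k = "Suc m" and L = L and f = f]) blast
  have "extendable p L P (Suc m) (f M0)"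
    unfolding extendable_def
  proof (intro allI impI)
    fix M
    obtain M' where "M' \<ge> M" "M' \<ge> Suc m" "\<forall>j<L. [f M' j = f M0 j] (mod int p ^ Suc m)"
      using agree by blast
    moreover have "P M (f M')"
      using f[OF \<open>M' \<ge> Suc m\<close>] \<open>M' \<ge> M\<close> by (auto intro: down_le)
    ultimately show "\<exists>z'. P M z' \<and> (\<forall>j<L. [z' j = f M0 j] (mod int p ^ Suc m))" by blast
  qed
  then show ?thesis
    using f[OF M0] by blast
qed

lemma padic_solution_if_solvable_mod_powers:
  fixes L :: nat
  assumes p: "p > 1"
    and down: "\<And>m z. P (Suc m) z \<Longrightarrow> P m z"
    and cong: "\<And>m z z'. (\<And>j. j < L \<Longrightarrow> [z j = z' j] (mod int p ^ m)) \<Longrightarrow> P m z \<Longrightarrow> P m z'"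
    and solvable: "\<And>m. \<exists>z. P m z"
  shows "\<exists>x. (\<forall>j<L. padic_int p (x j)) \<and> (\<forall>m. P m (\<lambda>j. x j m))"
proof -
  let ?step = "\<lambda>m z z'. extendable p L P (Suc m) z' \<and> (\<forall>j<L. [z' j = z j] (mod int p ^ m))"
  define seq where "seq = rec_nat (\<lambda>_. 0) (\<lambda>m z. SOME z'. ?step m z z')"
  have seq_Suc: "seq (Suc m) = (SOME z'. ?step m (seq m) z')" for m
    by (simp add: seq_def)
  have step: "extendable p L P m z \<Longrightarrow> \<exists>z'. ?step m z z'" for m z
    by (rule extendable_Suc[OF p down])
  have ext: "extendable p L P m (seq m)" for m
  proof (induction m)
    case 0
    show ?case using solvable by (simp add: extendable_def)
  next
    case (Suc m)
    show ?case using someI_ex[OF step[OF Suc.IH]] unfolding seq_Suc by blast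
  qed
  have compatible: "\<forall>j<L. [seq (Suc m) j = seq m j] (mod int p ^ m)" for m
    using someI_ex[OF step[OF ext]] unfolding seq_Suc by blast
  have "P m (seq m)" for m
  proof -
    obtain z where "P m z" "\<forall>j<L. [z j = seq m j] (mod int p ^ m)"
      using ext[of m] unfolding extendable_def by blast
    then show ?thesis using cong by blast
  qed
  then show ?thesis
    using compatible by (intro exI[of _ "\<lambda>j m. seq m j"]) (auto simp: padic_int_def)
qed

lemma loc_rep_at_if_solvable_mod_powers:
  assumes "prime p" and "\<And>m. \<exists>x. [pronic_form b x = 2 * int n] (mod int p ^ m)"
  shows "loc_rep_at b p n"
  unfolding loc_rep_at_iff_pronic_form
proof (rule padic_solution_if_solvable_mod_powers)
  show "p > 1" using prime_gt_1_nat[OF assms(1)] .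
  show "[pronic_form b x = 2 * int n] (mod int p ^ m)"
    if "[pronic_form b x = 2 * int n] (mod int p ^ Suc m)" for m x
    using that by (rule cong_dvd_modulus) simp
  show "[pronic_form b x' = 2 * int n] (mod int p ^ m)"
    if "\<And>j. j < length b \<Longrightarrow> [x j = x' j] (mod int p ^ m)"
      "[pronic_form b x = 2 * int n] (mod int p ^ m)" for m x x'
  proof -
    have "[pronic_form b x' = pronic_form b x] (mod int p ^ m)"
      by (rule pronic_form_cong, rule cong_sym, rule that(1))
    then show ?thesis using that(2) by (rule cong_trans)
  qed
qed (use assms(2) in blast)

section \<open>Hensel lifting\<close>

lemma odd_hensel_sqrt:
  fixes P X :: int
  assumes "odd P"
  shows "\<exists>t. [t^2 = 1 + P * X] (mod P ^ m) \<and> [t = 1] (mod P)"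
proof (induction m)
  case 0
  show ?case by (intro exI[of _ 1]) simp
next
  case (Suc m)
  then obtain t where t: "[t^2 = 1 + P * X] (mod P ^ m)" and t1: "[t = 1] (mod P)" by blast
  show ?case
  proof (cases m)
    case 0
    then show ?thesis by (intro exI[of _ 1]) (simp add: cong_iff_dvd_diff)
  next
    case (Suc m')
    obtain D where D: "t^2 = 1 + P * X + P^m * D"
      using t by (metis cong_iff_lin cong_sym)
    obtain k where k: "t = 1 + P * k"
      using t1 by (metis cong_iff_lin cong_sym add.commute)
    \<comment> \<open>\<open>h = 1/2\<close> mod \<open>P\<close>; the correction \<open>t + P\<^sup>m s\<close> with \<open>s = -D h\<close> kills the error \<open>P\<^sup>m D\<close>\<close>
    define h where "h = (P + 1) div 2"
    have h: "2 * h = P + 1" using assms by (auto simp: h_def elim!: oddE)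
    define s where "s = - D * h"
    have "D + 2 * s = D - D * (2 * h)"
      by (simp add: s_def)
    also have "\<dots> = - D * P"
      unfolding h by (simp add: algebra_simps)
    finally have ds: "D + 2 * s = - D * P" .
    have "(t + P^m * s)^2 - (1 + P * X) = P^m * ((D + 2 * s) + P * (2 * k * s + P^m' * s^2))"
      using D by (simp add: k Suc power2_eq_square algebra_simps)
    also have "\<dots> = P^m * (P * (- D + 2 * k * s + P^m' * s^2))"
      unfolding ds by (simp add: algebra_simps)
    finally have "[(t + P^m * s)^2 = 1 + P * X] (mod P ^ Suc m)"
      by (simp add: cong_iff_dvd_diff mult.assoc)
    moreover have "[t + P^m * s = 1] (mod P)"
      using cong_trans[of "t + P^m * s" t P 1] t1 Suc by (simp add: cong_iff_dvd_diff)
    ultimately show ?thesis by blast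
  qed
qed

lemma pronic_solvable_mod_pow2: "\<exists>z. [z * (z + 1) = 2 * N] (mod 2 ^ Suc m)"
  for N :: int
proof (induction m)
  case 0
  show ?case by (intro exI[of _ 0]) (simp add: cong_iff_dvd_diff)
next
  case (Suc m)
  then obtain z D where D: "z * (z + 1) = 2 * N + 2 ^ Suc m * D"
    by (metis cong_iff_lin cong_sym)
  show ?case
  proof (cases "even D")
    case True
    then obtain D' where "D = 2 * D'" by blast
    then have "z * (z + 1) - 2 * N = 2 ^ Suc (Suc m) * D'" using D by simp
    then show ?thesis by (intro exI[of _ z]) (simp add: cong_iff_dvd_diff)
  next
    case False
    then obtain D' where D': "D = 2 * D' + 1" by (metis oddE)
    have "(z + 2 ^ Suc m) * (z + 2 ^ Suc m + 1) - 2 * N = 2 ^ Suc m * (D + 2 * z + 1 + 2 ^ Suc m)"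
      using D by (simp add: algebra_simps)
    also have "\<dots> = 2 ^ Suc (Suc m) * (D' + z + 1 + 2 ^ m)"
      by (simp add: D' algebra_simps)
    finally show ?thesis by (intro exI[of _ "z + 2 ^ Suc m"]) (simp add: cong_iff_dvd_diff)
  qed
qed

lemma primitive_has_odd_coeff:
  assumes "primitive b"
  obtains j where "j < length b" "odd (b ! j)"
proof -
  have "\<not> (2::nat) dvd Gcd (set b)"
    using assms by (simp add: primitive_def)
  then show ?thesis
    using that by (metis Gcd_greatest in_set_conv_nth)
qed

lemma pronic_form_solvable_mod_pow2:
  assumes j: "j < length b" and odd: "odd (b ! j)"
  shows "\<exists>x. [pronic_form b x = 2 * int n] (mod 2 ^ m)"
proof -
  have "coprime (int (b ! j)) (2 ^ m)" using odd by simp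
  then obtain h where h: "[int (b ! j) * h = 1] (mod 2 ^ m)"
    using cong_solve_coprime_int by blast
  obtain z where "[z * (z + 1) = 2 * (int n * h)] (mod 2 ^ Suc m)"
    using pronic_solvable_mod_pow2 by blast
  then have "[z * (z + 1) = 2 * (int n * h)] (mod 2 ^ m)"
    by (rule cong_dvd_modulus) simp
  then have "[int (b ! j) * (z * (z + 1)) = 2 * int n * (int (b ! j) * h)] (mod 2 ^ m)"
    by (metis cong_scalar_left mult.left_commute mult.assoc)
  also have "[2 * int n * (int (b ! j) * h) = 2 * int n * 1] (mod 2 ^ m)"
    using h by (rule cong_scalar_left)
  finally have "[int (b ! j) * (z * (z + 1)) = 2 * int n] (mod 2 ^ m)"
    by simp
  moreover have "pronic_form b (\<lambda>k. if k = j then z else 0) = int (b ! j) * (z * (z + 1))"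
  proof -
    have "pronic_form b (\<lambda>k. if k = j then z else 0) =
        (\<Sum>k<length b. if k = j then int (b ! j) * (z * (z + 1)) else 0)"
      unfolding pronic_form_def by (rule sum.cong) auto
    then show ?thesis using j by simp
  qed
  ultimately show ?thesis
    by (intro exI[of _ "\<lambda>k. if k = j then z else 0"]) simp
qed

section \<open>Absorbing the deleted coefficient\<close>

lemma diag_form_scale_coord:
  assumes "j < length b"
  shows "diag_form b (u(j := u j * t)) = diag_form b u + int (b ! j) * (u j)^2 * (t^2 - 1)"
proof -
  have "diag_form b (u(j := u j * t)) =
      (\<Sum>k<length b. int (b ! k) * (u k)^2 + (if k = j then int (b ! j) * (u j)^2 * (t^2 - 1) else 0))"
    unfolding diag_form_def by (rule sum.cong) (auto simp: algebra_simps power_mult_distrib)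
  then show ?thesis
    using assms by (simp add: sum.distrib diag_form_def)
qed

lemma diag_form_add_by_rescaling:
  fixes P c s :: int
  assumes P: "prime P" "odd P" and c: "P ^ e dvd c"
    and j: "j < length b" and low: "\<not> P ^ e dvd int (b ! j) * (u j)^2"
  shows "\<exists>v. [diag_form b v = diag_form b u + c * s] (mod P ^ m)"
proof -
  have nu: "\<not> is_unit P" using P(1) not_prime_unit by blast
  define T where "T = int (b ! j) * (u j)^2"
  have "T \<noteq> 0" using low unfolding T_def by (metis dvd_0_right)
  define r where "r = multiplicity P T"
  have "r < e" using multiplicity_lessI[OF \<open>T \<noteq> 0\<close> nu] low by (simp add: T_def r_def)
  obtain C where TC: "T = P ^ r * C" and "\<not> P dvd C"
    using multiplicity_decompose'[OF \<open>T \<noteq> 0\<close> nu] unfolding r_def by blast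
  then have "coprime C (P ^ m)"
    using prime_imp_coprime[OF P(1)] by (simp add: coprime_commute[of C])
  then obtain C' where C': "[C * C' = 1] (mod P ^ m)"
    using cong_solve_coprime_int by blast
  obtain c' where c': "c = P ^ e * c'" using c by blast
  obtain t where t: "[t^2 = 1 + P * (P ^ (e - r - 1) * c' * s * C')] (mod P ^ m)"
    using odd_hensel_sqrt[OF P(2)] by blast
  have Pe: "P ^ r * (P * P ^ (e - r - 1)) = P ^ e"
    using \<open>r < e\<close> by (simp flip: power_add power_Suc)
  have "[T * (t^2 - 1) = T * (P * (P ^ (e - r - 1) * c' * s * C'))] (mod P ^ m)"
    using t by (intro cong_scalar_left) (simp add: cong_iff_dvd_diff algebra_simps)
  also have "T * (P * (P ^ (e - r - 1) * c' * s * C')) = P ^ e * c' * s * (C * C')"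
    unfolding TC Pe[symmetric] by (simp add: algebra_simps)
  also have "[P ^ e * c' * s * (C * C') = P ^ e * c' * s * 1] (mod P ^ m)"
    using C' by (rule cong_scalar_left)
  finally have "[T * (t^2 - 1) = c * s] (mod P ^ m)"
    by (simp add: c')
  then have "[diag_form b (u(j := u j * t)) = diag_form b u + c * s] (mod P ^ m)"
    by (simp add: diag_form_scale_coord[OF j] cong_add_lcancel flip: T_def)
  then show ?thesis by blast
qed

lemma diag_form_add_by_hypothesis:
  fixes c' s :: int
  assumes "prime p" and hyp: "mult_Zp_sub_DQ p c b"
    and c: "int c = int p ^ e * c'" "\<not> int p dvd c'"
    and high: "\<forall>j<length b. int p ^ e dvd int (b ! j) * (u j)^2"
  shows "\<exists>v. [diag_form b v = diag_form b u + int c * s] (mod int p ^ m)"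
proof -
  have "int p ^ e dvd diag_form b u + int c * s"
    using high c(1) unfolding diag_form_def by (auto intro!: dvd_sum dvd_add)
  then obtain K where K: "diag_form b u + int c * s = int p ^ e * K" by blast
  have "coprime c' (int p ^ m)"
    using prime_imp_coprime[of "int p" c'] \<open>prime p\<close> c(2) by (simp add: coprime_commute[of c'])
  then obtain h where h: "[c' * h = 1] (mod int p ^ m)"
    using cong_solve_coprime_int by blast
  obtain y where "[int c * (K * h) = diag_form b (\<lambda>j. y j m)] (mod int p ^ m)"
    using hyp padic_int_const[of p "K * h"]
    unfolding mult_Zp_sub_DQ_def in_DQ_closure_def diag_form_def by blast
  then have "[diag_form b (\<lambda>j. y j m) = int p ^ e * K * (c' * h)] (mod int p ^ m)"
    by (simp add: cong_sym_eq c(1) algebra_simps)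
  also have "[int p ^ e * K * (c' * h) = int p ^ e * K * 1] (mod int p ^ m)"
    using h by (rule cong_scalar_left)
  finally show ?thesis
    using K by auto
qed

lemma diag_form_add_coeff_multiple:
  assumes p: "prime p" "odd p" and "c > 0" and hyp: "mult_Zp_sub_DQ p c b"
  shows "\<exists>v. [diag_form b v = diag_form b u + int c * s] (mod int p ^ m)"
proof -
  have "int c \<noteq> 0" "\<not> is_unit (int p)"
    using \<open>c > 0\<close> p(1) by (auto simp: prime_int_nat_transfer)
  then obtain c' where c: "int c = int p ^ multiplicity (int p) (int c) * c'" "\<not> int p dvd c'"
    using multiplicity_decompose' by blast
  show ?thesis
  proof (cases "\<forall>j<length b. int p ^ multiplicity (int p) (int c) dvd int (b ! j) * (u j)^2")
    case True
    then show ?thesis by (rule diag_form_add_by_hypothesis[OF p(1) hyp c])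
  next
    case False
    then obtain j where "j < length b" "\<not> int p ^ multiplicity (int p) (int c) dvd int (b ! j) * (u j)^2"
      by blast
    moreover have "prime (int p)" "odd (int p)" using p by auto
    ultimately show ?thesis
      using diag_form_add_by_rescaling[of "int p" _ "int c"] c(1) by (metis dvd_triv_left)
  qed
qed

lemma pronic_form_absorb_coeff:
  assumes p: "prime p" "odd p" and "c > 0" and hyp: "mult_Zp_sub_DQ p c b"
    and sol: "[pronic_form b x + int c * (w * (w + 1)) = 2 * int n] (mod int p ^ m)"
  shows "\<exists>x'. [pronic_form b x' = 2 * int n] (mod int p ^ m)"
proof -
  define q where "q = int p ^ m"
  define \<sigma> where "\<sigma> = (\<Sum>j<length b. int (b ! j))"
  have "odd q" using p(2) by (simp add: q_def)
  have "diag_form b (\<lambda>j. 2 * x j + 1) + int c * (4 * (w * (w + 1))) =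
      4 * (pronic_form b x + int c * (w * (w + 1))) + \<sigma>"
    unfolding diag_form_odd \<sigma>_def by (simp add: algebra_simps)
  also have "[\<dots> = 4 * (2 * int n) + \<sigma>] (mod q)"
    using sol unfolding q_def by (intro cong_add cong_scalar_left cong_refl)
  finally have target: "[diag_form b (\<lambda>j. 2 * x j + 1) + int c * (4 * (w * (w + 1))) =
      8 * int n + \<sigma>] (mod q)" by simp
  obtain v where v: "[diag_form b v = diag_form b (\<lambda>j. 2 * x j + 1) + int c * (4 * (w * (w + 1)))] (mod q)"
    using diag_form_add_coeff_multiple[OF p \<open>c > 0\<close> hyp] unfolding q_def by blast
  \<comment> \<open>as \<open>q\<close> is odd, \<open>v\<close> may be taken odd coordinatewise, i.e. \<open>v = 2x' + 1\<close>\<close>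
  define x' where "x' j = (if even (v j) then v j + q else v j) div 2" for j
  have "2 * x' j + 1 = (if even (v j) then v j + q else v j)" for j
    using \<open>odd q\<close> by (auto simp: x'_def elim!: oddE)
  then have "[diag_form b (\<lambda>j. 2 * x' j + 1) = diag_form b v] (mod q)"
    by (intro diag_form_cong) (simp add: cong_iff_dvd_diff)
  then have "[diag_form b (\<lambda>j. 2 * x' j + 1) = 8 * int n + \<sigma>] (mod q)"
    using cong_trans[OF cong_trans[OF _ v] target] by blast
  then have "[4 * pronic_form b x' + \<sigma> = 4 * (2 * int n) + \<sigma>] (mod q)"
    unfolding diag_form_odd \<sigma>_def[symmetric] by simp
  then have "[4 * pronic_form b x' = 4 * (2 * int n)] (mod q)"
    by (simp add: cong_add_rcancel)
  moreover have "coprime 4 q"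
    using \<open>odd q\<close> coprime_mult_left_iff[of 2 2 q] by simp
  ultimately have "[pronic_form b x' = 2 * int n] (mod q)"
    by (rule cong_mult_lcancel[THEN iffD1, rotated])
  then show ?thesis unfolding q_def by blast
qed

lemma loc_rep_del_nth_if_solvable_mod_powers:
  assumes i: "i < length a" and "a ! i > 0" and prim: "primitive (del_nth a i)"
    and hyp: "\<forall>p. prime p \<and> odd p \<longrightarrow> mult_Zp_sub_DQ p (a ! i) (del_nth a i)"
    and sol: "\<And>p m. prime p \<Longrightarrow> \<exists>x. [pronic_form a x = 2 * int n] (mod int p ^ m)"
  shows "loc_rep (del_nth a i) n"
  unfolding loc_rep_def
proof (intro allI impI)
  fix p :: nat assume p: "prime p"
  show "loc_rep_at (del_nth a i) p n"
  proof (rule loc_rep_at_if_solvable_mod_powers[OF p])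
    fix m
    show "\<exists>x. [pronic_form (del_nth a i) x = 2 * int n] (mod int p ^ m)"
    proof (cases "p = 2")
      case True
      obtain j where "j < length (del_nth a i)" "odd (del_nth a i ! j)"
        using primitive_has_odd_coeff[OF prim] .
      from pronic_form_solvable_mod_pow2[OF this] show ?thesis
        using True by simp
    next
      case False
      then have "odd p"
        using p prime_odd_nat prime_ge_2_nat[OF p] by fastforce
      obtain x where "[pronic_form a x = 2 * int n] (mod int p ^ m)"
        using sol[OF p] by blast
      then have "[pronic_form (del_nth a i) (x \<circ> skip i) + int (a ! i) * (x i * (x i + 1)) =
          2 * int n] (mod int p ^ m)"
        by (simp add: pronic_form_del_nth[OF i] add.commute)
      then show ?thesis
        using pronic_form_absorb_coeff[OF p \<open>odd p\<close> \<open>a ! i > 0\<close>] hyp p \<open>odd p\<close> by simp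
    qed
  qed
qed

section \<open>Old regular forms\<close>

lemma old_regular_if_del_nth_regular:
  assumes i: "i < length a" and "a ! i > 0" and prim: "primitive (del_nth a i)"
    and reg: "regular (del_nth a i)"
    and hyp: "\<forall>p. prime p \<and> odd p \<longrightarrow> mult_Zp_sub_DQ p (a ! i) (del_nth a i)"
  shows "old_regular a"
proof -
  note loc_del = loc_rep_del_nth_if_solvable_mod_powers[OF i \<open>a ! i > 0\<close> prim hyp]
  have tri_del: "tri_rep (del_nth a i) n" if "n > 0" "loc_rep (del_nth a i) n" for n
    using reg that unfolding regular_def by blast
  have "tri_rep (del_nth a i) n" if tri: "tri_rep a n" and "n > 0" for n
  proof -
    obtain x where "pronic_form a x = 2 * int n"
      using tri unfolding tri_rep_iff_pronic_form by blast
    then have "loc_rep (del_nth a i) n"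
      by (intro loc_del) (auto intro!: exI[of _ x])
    then show ?thesis using tri_del \<open>n > 0\<close> by blast
  qed
  moreover have "regular a"
    unfolding regular_def
  proof (intro allI impI)
    fix n :: nat assume "n > 0" and loc: "loc_rep a n"
    have "\<exists>x. [pronic_form a x = 2 * int n] (mod int p ^ m)" if p: "prime p" for p m
    proof -
      obtain x where "\<forall>m. [pronic_form a (\<lambda>j. x j m) = 2 * int n] (mod int p ^ m)"
        using loc p unfolding loc_rep_def loc_rep_at_iff_pronic_form by blast
      then show ?thesis by blast
    qed
    then have "loc_rep (del_nth a i) n"
      by (rule loc_del)
    then show "tri_rep a n"
      using tri_del \<open>n > 0\<close> tri_rep_if_tri_rep_del_nth[OF i] by blast
  qed
  ultimately show ?thesis
    unfolding old_regular_def using i tri_rep_if_tri_rep_del_nth[OF i] by blast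
qed

lemma primitive_del_nth_if_represents_nth:
  assumes i: "i < length a" and "Gcd (set a) = 1" and "tri_rep (del_nth a i) (a ! i)"
  shows "primitive (del_nth a i)"
proof -
  define d where "d = Gcd (set (del_nth a i))"
  obtain x where x: "(\<Sum>j<length (del_nth a i). int (del_nth a i ! j) * (x j * (x j + 1) div 2)) = int (a ! i)"
    using assms(3) unfolding tri_rep_def by blast
  have "int d dvd (\<Sum>j<length (del_nth a i). int (del_nth a i ! j) * (x j * (x j + 1) div 2))"
    by (intro dvd_sum dvd_mult2) (simp add: d_def Gcd_dvd)
  then have "d dvd a ! i"
    using x by simp
  then have "d dvd y" if "y \<in> set a" for y
    using set_subset_insert_del_nth[OF i] that by (auto simp: d_def Gcd_dvd)
  then have "d dvd Gcd (set a)"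
    by (rule Gcd_greatest)
  then show ?thesis
    using assms(2) by (simp add: primitive_def d_def)
qed

text \<open>Starting from \<open>x \<equiv> (q-1)/2\<close>, where \<open>Q\<^sub>b(2x+1) \<equiv> 0\<close> mod \<open>q\<close>, adding \<open>c k\<close> to the represented
  value shifts \<open>Q\<^sub>b(2x+1)\<close> by \<open>8 c k\<close>, and \<open>8\<close> is invertible mod \<open>q\<close>.\<close>
lemma diag_form_reaches_coeff_multiples_mod:
  fixes q g :: int
  assumes "odd q" "q > 0" and closed: "\<And>N k. tri_rep b N \<Longrightarrow> tri_rep b (N + c * k)"
  shows "\<exists>y. [int c * g = diag_form b y] (mod q)"
proof -
  define y0 where "y0 = (q - 1) div 2"
  have y0: "2 * y0 + 1 = q" "y0 \<ge> 0"
    using assms(1,2) by (auto simp: y0_def elim!: oddE)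
  have "coprime ((2::int) ^ 3) q"
    by (rule coprime_power_left_iff[THEN iffD2]) (simp add: \<open>odd q\<close>)
  then obtain h where h: "[8 * h = 1] (mod q)"
    using cong_solve_coprime_int by auto
  define k where "k = nat ((g * h) mod q)"
  have "[8 * int k = 8 * (g * h)] (mod q)"
    using \<open>q > 0\<close> by (intro cong_scalar_left) (simp add: k_def cong_def)
  also have "[8 * (g * h) = g * 1] (mod q)"
    using cong_scalar_left[OF h, of g] by (simp add: algebra_simps)
  finally have k: "[8 * int k = g] (mod q)"
    by simp
  define S where "S = (\<Sum>j<length b. int (b ! j) * (y0 * (y0 + 1) div 2))"
  have "S \<ge> 0"
    unfolding S_def using y0(2) by (intro sum_nonneg mult_nonneg_nonneg) simp_all
  then have "tri_rep b (nat S)"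
    unfolding tri_rep_def S_def by (intro exI[of _ "\<lambda>_. y0"]) simp
  then obtain x where x: "pronic_form b x = 2 * int (nat S + c * k)"
    using closed unfolding tri_rep_iff_pronic_form by blast
  have "pronic_form b (\<lambda>_. y0) = 2 * S"
    using twice_tri_sum[of b "\<lambda>_. y0"] by (simp add: S_def)
  then have eq: "diag_form b (\<lambda>j. 2 * x j + 1) = diag_form b (\<lambda>_. q) + int c * (8 * int k)"
    using diag_form_odd[of b x] diag_form_odd[of b "\<lambda>_. y0"] y0(1) x \<open>S \<ge> 0\<close>
    by (simp add: algebra_simps)
  have "[diag_form b (\<lambda>_. q) = 0] (mod q)"
    unfolding diag_form_def cong_0_iff by (intro dvd_sum) (simp add: power2_eq_square)
  then have "[diag_form b (\<lambda>_. q) + int c * (8 * int k) = 0 + int c * g] (mod q)"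
    using k by (intro cong_add cong_scalar_left)
  then have "[diag_form b (\<lambda>j. 2 * x j + 1) = int c * g] (mod q)"
    unfolding eq by simp
  then have "[int c * g = diag_form b (\<lambda>j. 2 * x j + 1)] (mod q)"
    by (rule cong_sym)
  then show ?thesis by blast
qed

lemma mult_Zp_sub_DQ_if_translation_closed:
  assumes p: "prime p" "odd p" and closed: "\<And>N k. tri_rep b N \<Longrightarrow> tri_rep b (N + c * k)"
  shows "mult_Zp_sub_DQ p c b"
  unfolding mult_Zp_sub_DQ_def
proof (intro allI impI)
  fix \<gamma> assume \<gamma>: "padic_int p \<gamma>"
  have "\<exists>y. (\<forall>j<length b. padic_int p (y j)) \<and>
      (\<forall>m. [int c * \<gamma> m = diag_form b (\<lambda>j. y j m)] (mod int p ^ m))"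
  proof (rule padic_solution_if_solvable_mod_powers)
    show "p > 1" using prime_gt_1_nat[OF p(1)] .
    show "[int c * \<gamma> m = diag_form b y] (mod int p ^ m)"
      if "[int c * \<gamma> (Suc m) = diag_form b y] (mod int p ^ Suc m)" for m y
    proof -
      have "[int c * \<gamma> m = int c * \<gamma> (Suc m)] (mod int p ^ m)"
        using \<gamma> unfolding padic_int_def by (intro cong_scalar_left) (simp add: cong_sym)
      moreover have "[int c * \<gamma> (Suc m) = diag_form b y] (mod int p ^ m)"
        using that by (rule cong_dvd_modulus) simp
      ultimately show ?thesis by (rule cong_trans)
    qed
    show "[int c * \<gamma> m = diag_form b y'] (mod int p ^ m)"
      if "\<And>j. j < length b \<Longrightarrow> [y j = y' j] (mod int p ^ m)"
        "[int c * \<gamma> m = diag_form b y] (mod int p ^ m)" for m y y'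
      using that(2) diag_form_cong[OF that(1)] by (rule cong_trans)
    show "\<exists>y. [int c * \<gamma> m = diag_form b y] (mod int p ^ m)" for m
      using p(2) prime_gt_0_nat[OF p(1)] by (intro diag_form_reaches_coeff_multiples_mod closed) auto
  qed
  then show "in_DQ_closure p b (\<lambda>m. int c * \<gamma> m)"
    unfolding in_DQ_closure_def diag_form_def by blast
qed

lemma del_nth_regular_if_old_regular:
  assumes pos: "\<forall>x\<in>set a. x > 0" and "Gcd (set a) = 1" and "old_regular a"
  shows "\<exists>i<length a. primitive (del_nth a i) \<and> regular (del_nth a i) \<and>
    (\<forall>p. prime p \<and> odd p \<longrightarrow> mult_Zp_sub_DQ p (a ! i) (del_nth a i))"
proof -
  obtain i where i: "i < length a" and "regular a"
    and same: "\<And>n. n > 0 \<Longrightarrow> tri_rep (del_nth a i) n \<longleftrightarrow> tri_rep a n"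
    using assms(3) unfolding old_regular_def by blast
  have "a ! i > 0" using pos i by simp
  have shift: "tri_rep (del_nth a i) (N + a ! i)" if tri: "tri_rep (del_nth a i) N" for N
  proof -
    obtain x where "pronic_form (del_nth a i) x = 2 * int N"
      using tri unfolding tri_rep_iff_pronic_form by blast
    then have "pronic_form a (insert_at i 1 x) = 2 * int (N + a ! i)"
      using i by (simp add: pronic_form_insert_at)
    then show ?thesis
      using same[of "N + a ! i"] \<open>a ! i > 0\<close> unfolding tri_rep_iff_pronic_form by auto
  qed
  have closed: "tri_rep (del_nth a i) (N + a ! i * k)" if "tri_rep (del_nth a i) N" for N k
  proof (induction k)
    case 0
    show ?case using that by simp
  next
    case (Suc k)
    show ?case using shift[OF Suc.IH] by (simp add: algebra_simps)
  qed
  have "tri_rep (del_nth a i) 0"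
    unfolding tri_rep_def by (intro exI[of _ "\<lambda>_. 0"]) simp
  then have "primitive (del_nth a i)"
    using closed[of 0 1] primitive_del_nth_if_represents_nth[OF i assms(2)] by simp
  moreover have "regular (del_nth a i)"
    using \<open>regular a\<close> same loc_rep_if_loc_rep_del_nth[OF i] unfolding regular_def by blast
  moreover have "mult_Zp_sub_DQ p (a ! i) (del_nth a i)" if "prime p" "odd p" for p
    using that closed by (rule mult_Zp_sub_DQ_if_translation_closed)
  ultimately show ?thesis
    using i by blast
qed

theorem lemma3p1:
  fixes a :: "nat list"
  assumes "length a \<ge> 3"
    and "\<forall>x\<in>set a. x > 0"
    and "Gcd (set a) = 1"
  shows "old_regular a \<longleftrightarrow>
    (\<exists>i<length a. primitive (del_nth a i) \<and> regular (del_nth a i) \<and>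
       (\<forall>p. prime p \<and> odd p \<longrightarrow> mult_Zp_sub_DQ p (a ! i) (del_nth a i)))"
  using del_nth_regular_if_old_regular[OF assms(2,3)] old_regular_if_del_nth_regular assms(2)
  by (meson nth_mem)

end
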